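(* Let $\sigma$ be the logistic squasher $\sigma(x)=1/(1+e^{-x})$, let $0<\delta\le1$, $1\le\alpha_n\le\log n$, let $\mathbf{u},\mathbf{v}\in\mathbb{R}^d$ with $v^{(l)}-u^{(l)}\ge2\delta$ for $l\in\{1,\dots,d\}$, and let $x\in[-\alpha_n,\alpha_n]^d$. Let $L,r,n\in\mathbb{N}$ with $L\ge2$, $r\ge2d$, $n\ge8d$ and $n\ge\exp(r+1)$. For a weight vector $\mathbf{w}$ let $f_{\mathbf{w}}(x)=f^{(L)}_{1,1}(x)$, where $f^{(l)}_{1,i}(x)=\sigma\big(\sum_{j=1}^r w^{(l-1)}_{1,i,j}f^{(l-1)}_{1,j}(x)+w^{(l-1)}_{1,i,0}\big)$ for $l=2,\dots,L$ and $f^{(1)}_{1,i}(x)=\sigma\big(\sum_{j=1}^d w^{(0)}_{1,i,j}x^{(j)}+w^{(0)}_{1,i,0}\big)$, $i\in\{1,\dots,r\}$. Assume $\mathbf{w}$ satisfies: $w^{(0)}_{1,j,j}=\frac{4d(\log n)^2}{\delta}$ and $w^{(0)}_{1,j,0}=-\frac{4d(\log n)^2}{\delta}u^{(j)}$ for $j\in\{1,\dots,d\}$; $w^{(0)}_{1,j+d,j}=-\frac{4d(\log n)^2}{\delta}$ and $w^{(0)}_{1,j+d,0}=\frac{4d(\log n)^2}{\delta}v^{(j)}$ for $j\in\{1,\dots,d\}$; $w^{(0)}_{1,s,t}=0$ if $s\le2d$, $s\ne t$, $s\ne t+d$ and $t>0$; $w^{(1)}_{1,1,t}=8(\log n)^2$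 for $t\in\{1,\dots,2d\}$, $w^{(1)}_{1,1,0}=-8(\log n)^2(2d-\tfrac12)$, $w^{(1)}_{1,1,t}=0$ for $t>2d$; $w^{(l)}_{1,1,1}=6(\log n)^2$, $w^{(l)}_{1,1,0}=-3(\log n)^2$ and $w^{(l)}_{1,1,t}=0$ for $t>1$, for all $l\in\{2,\dots,L\}$. Let $\bar{\mathbf{w}}$ be a weight vector with $|\bar w^{(l)}_{1,i,j}-w^{(l)}_{1,i,j}|\le\log n$ for all $i,j$ and all $l=0,\dots,L-1$. Then $f_{\bar{\mathbf{w}}}(x)\ge1-\frac1n$ if $x\in[u^{(1)}+\delta,v^{(1)}-\delta]\times\dots\times[u^{(d)}+\delta,v^{(d)}-\delta]$, and $f_{\bar{\mathbf{w}}}(x)\le\frac1n$ if $x^{(i)}\notin[u^{(i)}-\delta,v^{(i)}+\delta]$ for some $i\in\{1,\dots,d\}$.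
   Context: $x^{(j)}$ denotes the $j$-th component of $x\in\mathbb{R}^d$; $\log$ is the natural logarithm. *)

theory Defs
  imports Complex_Main
begin

definition sigma :: "real \<Rightarrow> real" where
  "sigma x = 1 / (1 + exp (- x))"

text \<open>Inputs x :: nat \<Rightarrow> real with components
  x 1, ..., x d.  Weights w l i j stands for w^{(l)}_{1,i,j}.
  fnet d r w x l i = f^{(l)}_{1,i}(x) for l \<ge> 1 (the value at l = 0 is irrelevant).\<close>
fun fnet :: "nat \<Rightarrow> nat \<Rightarrow> (nat \<Rightarrow> nat \<Rightarrow> nat \<Rightarrow> real) \<Rightarrow> (nat \<Rightarrow> real) \<Rightarrow> nat \<Rightarrow> nat \<Rightarrow> real" where
  "fnet d r w x 0 i = 0"
| "fnet d r w x (Suc 0) i = sigma ((\<Sum>j=1..d. w 0 i j * x j) + w 0 i 0)"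
| "fnet d r w x (Suc (Suc k)) i =
     sigma ((\<Sum>j=1..r. w (Suc k) i j * fnet d r w x (Suc k) j) + w (Suc k) i 0)"

definition fw :: "nat \<Rightarrow> nat \<Rightarrow> nat \<Rightarrow> (nat \<Rightarrow> nat \<Rightarrow> nat \<Rightarrow> real) \<Rightarrow> (nat \<Rightarrow> real) \<Rightarrow> real" where
  "fw d r L w x = fnet d r w x L 1"

end

theory Submission
  imports Defs
begin

(* Let lam = ln n. Since n >= e^(r+1), lam >= r + 1, so perturbing the weights of a neuron by at
   most lam moves its input by at most lam (r + 1) <= lam^2 when its inputs lie in [0,1], and by at
   most lam (d lam + 1) <= 2 d lam^2 in the first layer, whose inputs are bounded by lam.
   The exact weights give every neuron a margin of twice this error: the first layer tests the
   2d half-spaces x_j >= u_j and x_j <= v_j with margin 4 d lam^2, the second layer is an AND of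
   these tests, and each further layer maps a value within e^(-lam^2) of 0 (of 1) to a value
   within e^(-lam^2) of 0 (of 1). As sigma y >= 1 - e^(-c) for y >= c and sigma y <= e^(-c) for
   y <= -c, and e^(-lam^2) <= e^(-lam) = 1/n, this gives the two bounds. *)

lemma sigma_pos: "0 < sigma y"
  by (simp add: sigma_def add_pos_pos)

lemma sigma_less_1: "sigma y < 1"
  by (simp add: sigma_def field_simps add_pos_pos)

lemma sigma_ge_1_minus_exp:
  assumes "c \<le> y"
  shows "1 - exp (- c) \<le> sigma y"
proof -
  define a where "a = exp (- y)"
  have "0 < a" by (simp add: a_def)
  then have "(1 - a) * (1 + a) \<le> 1" by (simp add: algebra_simps)
  then have "1 - a \<le> sigma y"
    using \<open>0 < a\<close> unfolding sigma_def a_def[symmetric] by (simp add: le_divide_eq add_pos_pos)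
  moreover have "exp (- y) \<le> exp (- c)" using assms by simp
  ultimately show ?thesis unfolding a_def by linarith
qed

lemma sigma_le_exp:
  assumes "y \<le> - c"
  shows "sigma y \<le> exp (- c)"
proof -
  have "sigma y \<le> 1 / exp (- y)"
    unfolding sigma_def by (rule divide_left_mono) (auto simp: add_pos_pos)
  also have "\<dots> = exp y" by (simp add: exp_minus inverse_eq_divide)
  also have "\<dots> \<le> exp (- c)" using assms by simp
  finally show ?thesis .
qed

lemma sigma_ge_if_near:
  assumes "\<bar>y - z\<bar> \<le> c" "2 * c \<le> z"
  shows "1 - exp (- c) \<le> sigma y"
  using assms by (intro sigma_ge_1_minus_exp) (simp add: abs_le_iff)

lemma sigma_le_if_near:
  assumes "\<bar>y - z\<bar> \<le> c" "z \<le> - 2 * c"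
  shows "sigma y \<le> exp (- c)"
  using assms by (intro sigma_le_exp) (simp add: abs_le_iff)

lemma mult_exp_minus_le_1: "(a :: real) * exp (- a) \<le> 1"
proof -
  have "a \<le> exp a" using exp_ge_add_one_self[of a] by linarith
  then show ?thesis by (simp add: exp_minus field_simps)
qed

lemma mult_exp_minus_mult_le_1:
  fixes a Q :: real
  assumes "4 \<le> Q"
  shows "8 * a * exp (- (2 * a * Q)) \<le> 1"
proof -
  have "Q * (8 * a * exp (- (2 * a * Q))) = 4 * ((2 * a * Q) * exp (- (2 * a * Q)))" by simp
  also have "\<dots> \<le> Q * 1" using mult_exp_minus_le_1[of "2 * a * Q"] assms by linarith
  finally show ?thesis using assms by simp
qed

lemma ln_size_bounds:
  assumes "2 \<le> r" and "exp (real r + 1) \<le> real n"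
  shows "1 \<le> ln (real n)" and "(real r + 1) * ln (real n) \<le> (ln (real n))^2"
    and "6 \<le> (ln (real n))^2" and "exp (- ((ln (real n))^2)) \<le> 1 / real n"
proof -
  have "0 < real n" using assms(2) by (metis exp_gt_zero order_less_le_trans)
  then have r_ln: "real r + 1 \<le> ln (real n)" using assms(2) by (simp add: ln_ge_iff)
  then have "3 \<le> ln (real n)" using assms(1) by linarith
  then show "1 \<le> ln (real n)" by simp
  show "(real r + 1) * ln (real n) \<le> (ln (real n))^2"
    unfolding power2_eq_square using r_ln \<open>3 \<le> ln (real n)\<close> by (intro mult_right_mono) auto
  show "6 \<le> (ln (real n))^2"
    using power_mono[OF \<open>3 \<le> ln (real n)\<close>, of 2] by simp
  have "exp (- ((ln (real n))^2)) \<le> exp (- ln (real n))"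
    unfolding power2_eq_square using \<open>3 \<le> ln (real n)\<close> by simp
  also have "\<dots> = 1 / real n" using \<open>0 < real n\<close> by (simp add: exp_minus inverse_eq_divide)
  finally show "exp (- ((ln (real n))^2)) \<le> 1 / real n" .
qed

lemma sum_le_if_one_small:
  fixes y :: "'a \<Rightarrow> real"
  assumes "finite A" "a \<in> A" "y a \<le> e" "\<forall>t\<in>A. y t \<le> 1"
  shows "sum y A \<le> real (card A) - 1 + e"
proof -
  have "sum y A = y a + sum y (A - {a})" using assms(1,2) by (rule sum.remove)
  also have "sum y (A - {a}) \<le> card (A - {a})" using assms(4) sum_mono[of "A - {a}" y "\<lambda>_. 1"] by simp
  also have "card (A - {a}) = card A - 1" using assms(1,2) by simp
  finally show ?thesis
    using assms(1-3) card_gt_0_iff[of A] by (auto simp: of_nat_diff)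
qed

definition preact :: "nat \<Rightarrow> (nat \<Rightarrow> real) \<Rightarrow> (nat \<Rightarrow> real) \<Rightarrow> real" where
  "preact m c y = (\<Sum>j=1..m. c j * y j) + c 0"

lemma preact_perturbation:
  assumes "\<forall>j\<le>m. \<bar>a j - b j\<bar> \<le> B" and "\<forall>j\<in>{1..m}. \<bar>y j\<bar> \<le> M"
  shows "\<bar>preact m a y - preact m b y\<bar> \<le> B * (m * M + 1)"
proof -
  have "preact m a y - preact m b y = (\<Sum>j=1..m. (a j - b j) * y j) + (a 0 - b 0)"
    by (simp add: preact_def sum_subtractf left_diff_distrib)
  also have "\<bar>\<dots>\<bar> \<le> \<bar>\<Sum>j=1..m. (a j - b j) * y j\<bar> + \<bar>a 0 - b 0\<bar>"
    by (rule abs_triangle_ineq)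
  also have "\<bar>\<Sum>j=1..m. (a j - b j) * y j\<bar> \<le> (\<Sum>j=1..m. \<bar>a j - b j\<bar> * \<bar>y j\<bar>)"
    unfolding abs_mult[symmetric] by (rule sum_abs)
  also have "\<dots> \<le> (\<Sum>j=1..m. B * M)"
    using assms by (intro sum_mono mult_mono) auto
  also have "\<bar>a 0 - b 0\<bar> \<le> B"
    using assms(1) by simp
  finally show ?thesis by (simp add: algebra_simps)
qed

lemma preact_single_weight:
  assumes "p \<in> {1..m}" and "\<forall>j\<in>{1..m}. j \<noteq> p \<longrightarrow> c j = 0"
  shows "preact m c y = c p * y p + c 0"
proof -
  have "(\<Sum>j=1..m. c j * y j) = (\<Sum>j=1..m. if j = p then c p * y p else 0)"
    using assms(2) by (intro sum.cong) auto
  then show ?thesis using assms(1) by (simp add: preact_def)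
qed

lemma preact_single_weight_perturbed:
  assumes "p \<in> {1..m}" and "\<forall>j\<in>{1..m}. j \<noteq> p \<longrightarrow> c j = 0"
    and "\<forall>j\<le>m. \<bar>cb j - c j\<bar> \<le> lam" and "\<forall>j\<in>{1..m}. \<bar>y j\<bar> \<le> lam" and "1 \<le> lam"
  shows "\<bar>preact m cb y - (c p * y p + c 0)\<bar> \<le> 2 * real m * lam^2"
proof -
  have "preact m c y = c p * y p + c 0" using assms(1,2) by (rule preact_single_weight)
  moreover have "\<bar>preact m cb y - preact m c y\<bar> \<le> lam * (m * lam + 1)"
    using assms(3,4) by (rule preact_perturbation)
  moreover have "lam * 1 \<le> lam * lam" using \<open>1 \<le> lam\<close> by (intro mult_left_mono) auto
  moreover have "1 * (lam * lam) \<le> real m * (lam * lam)"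
    using assms(1) by (intro mult_right_mono) auto
  ultimately show ?thesis by (simp add: power2_eq_square algebra_simps)
qed

lemma preact_uniform_block:
  assumes "k \<le> m" and "\<forall>t\<in>{1..k}. c t = a" and "\<forall>t>k. c t = 0"
  shows "preact m c y = a * (\<Sum>t=1..k. y t) + c 0"
proof -
  have "{1..m} = {1..k} \<union> {k+1..m}" using assms(1) by auto
  then have "(\<Sum>j=1..m. c j * y j) = (\<Sum>j=1..k. c j * y j) + (\<Sum>j=k+1..m. c j * y j)"
    by (simp add: sum.union_disjoint)
  also have "\<dots> = a * (\<Sum>t=1..k. y t)"
    using assms(2,3) by (simp add: sum_distrib_left)
  finally show ?thesis by (simp add: preact_def)
qed

context
  fixes a x u v :: "nat \<Rightarrow> real" and K \<delta> c :: real and d :: nat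
  assumes K_nonneg: "0 \<le> K" and margin: "K * \<delta> = 2 * c"
    and lower: "\<forall>j\<in>{1..d}. \<bar>a j - K * (x j - u j)\<bar> \<le> c"
    and upper: "\<forall>j\<in>{1..d}. \<bar>a (j + d) - K * (v j - x j)\<bar> \<le> c"
begin

lemma box_neurons_inside:
  assumes inside: "\<forall>i\<in>{1..d}. u i + \<delta> \<le> x i \<and> x i \<le> v i - \<delta>"
  shows "\<forall>t\<in>{1..2*d}. 1 - exp (- c) \<le> sigma (a t)"
proof
  have margin_pos: "2 * c \<le> K * s" if "\<delta> \<le> s" for s
    using mult_left_mono[OF that K_nonneg] margin by simp
  fix t assume t: "t \<in> {1..2*d}"
  show "1 - exp (- c) \<le> sigma (a t)"
  proof (cases "t \<le> d")
    case True
    then have j: "t \<in> {1..d}" using t by simp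
    then have "\<delta> \<le> x t - u t" using inside by force
    from sigma_ge_if_near[OF lower[rule_format, OF j] margin_pos[OF this]] show ?thesis .
  next
    case False
    define j where "j = t - d"
    have j: "j \<in> {1..d}" and "t = j + d" using t False unfolding j_def by auto
    from j have "\<delta> \<le> v j - x j" using inside by force
    from sigma_ge_if_near[OF upper[rule_format, OF j] margin_pos[OF this]] show ?thesis
      unfolding \<open>t = j + d\<close> .
  qed
qed

lemma box_neurons_outside:
  assumes outside: "\<exists>i\<in>{1..d}. x i \<notin> {u i - \<delta> .. v i + \<delta>}"
  shows "\<exists>t\<in>{1..2*d}. sigma (a t) \<le> exp (- c)"
proof -
  have margin_neg: "K * s \<le> - 2 * c" if "s \<le> - \<delta>" for s
    using mult_left_mono[OF that K_nonneg] margin by simp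
  obtain i where i: "i \<in> {1..d}" and "x i - u i \<le> - \<delta> \<or> v i - x i \<le> - \<delta>"
    using outside by force
  then show ?thesis
  proof (elim disjE)
    assume "x i - u i \<le> - \<delta>"
    from sigma_le_if_near[OF lower[rule_format, OF i] margin_neg[OF this]] show ?thesis
      using i by force
  next
    assume "v i - x i \<le> - \<delta>"
    from sigma_le_if_near[OF upper[rule_format, OF i] margin_neg[OF this]] show ?thesis
      using i by force
  qed
qed

end

lemma and_neuron:
  fixes c cb y :: "nat \<Rightarrow> real"
  assumes weights: "\<forall>t\<in>{1..k}. c t = 8 * Q" "c 0 = - 8 * Q * (real k - 1/2)" "\<forall>t>k. c t = 0"
    and close: "\<forall>t\<le>r. \<bar>cb t - c t\<bar> \<le> lam" and bounded: "\<forall>t\<in>{1..r}. \<bar>y t\<bar> \<le> 1"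
    and "k \<le> r" "(real r + 1) * lam \<le> Q" "4 * real k * e \<le> 1"
  shows "\<forall>t\<in>{1..k}. 1 - e \<le> y t \<Longrightarrow> 1 - exp (- Q) \<le> sigma (preact r cb y)"
    and "\<exists>t\<in>{1..k}. y t \<le> e \<Longrightarrow> sigma (preact r cb y) \<le> exp (- Q)"
proof -
  define T where "T = (\<Sum>t=1..k. y t)"
  have "preact r c y = 8 * Q * T + c 0"
    unfolding T_def using \<open>k \<le> r\<close> weights by (intro preact_uniform_block)
  moreover have "\<bar>preact r cb y - preact r c y\<bar> \<le> lam * (real r * 1 + 1)"
    using close bounded by (rule preact_perturbation)
  ultimately have near: "\<bar>preact r cb y - 8 * Q * (T - k + 1/2)\<bar> \<le> Q"
    using weights(2) \<open>(real r + 1) * lam \<le> Q\<close> by (simp add: algebra_simps)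
  have "0 \<le> lam" using close by force
  then have "0 \<le> (real r + 1) * lam" by simp
  then have "0 \<le> Q" using \<open>(real r + 1) * lam \<le> Q\<close> by linarith
  show "1 - exp (- Q) \<le> sigma (preact r cb y)" if "\<forall>t\<in>{1..k}. 1 - e \<le> y t"
  proof (rule sigma_ge_if_near[OF near])
    have "k * (1 - e) \<le> T" unfolding T_def using sum_mono[of "{1..k}" "\<lambda>_. 1 - e" y] that by simp
    then have "8 * Q * (k * (1 - e)) \<le> 8 * Q * T" using \<open>0 \<le> Q\<close> by (intro mult_left_mono) auto
    moreover have "Q * (4 * real k * e) \<le> Q"
      using \<open>0 \<le> Q\<close> \<open>4 * real k * e \<le> 1\<close> mult_left_mono by fastforce
    ultimately show "2 * Q \<le> 8 * Q * (T - k + 1/2)" by (simp add: algebra_simps)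
  qed
  show "sigma (preact r cb y) \<le> exp (- Q)" if one_small: "\<exists>t\<in>{1..k}. y t \<le> e"
  proof (rule sigma_le_if_near[OF near])
    obtain t where t: "t \<in> {1..k}" "y t \<le> e" using one_small by blast
    have "T \<le> real k - 1 + e" unfolding T_def
      using sum_le_if_one_small[of "{1..k}" t y e] t bounded \<open>k \<le> r\<close> by (auto simp: abs_le_iff)
    then have "8 * Q * T \<le> 8 * Q * (real k - 1 + e)" using \<open>0 \<le> Q\<close> by (intro mult_left_mono) auto
    moreover have "4 * e \<le> 1"
    proof (cases "0 \<le> e")
      case True
      have "1 \<le> real k" using t by simp
      from mult_right_mono[OF this True] show ?thesis using \<open>4 * real k * e \<le> 1\<close> by linarith
    qed simp
    then have "Q * (4 * e) \<le> Q" using \<open>0 \<le> Q\<close> mult_left_mono by fastforce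
    ultimately show "8 * Q * (T - k + 1/2) \<le> - 2 * Q" by (simp add: algebra_simps)
  qed
qed

lemma amplifier_neuron:
  fixes c cb y :: "nat \<Rightarrow> real"
  assumes weights: "c 1 = 6 * Q" "c 0 = - 3 * Q" "\<forall>t>1. c t = 0"
    and close: "\<forall>t\<le>r. \<bar>cb t - c t\<bar> \<le> lam" and bounded: "\<forall>t\<in>{1..r}. \<bar>y t\<bar> \<le> 1"
    and "1 \<le> r" "(real r + 1) * lam \<le> Q" "6 \<le> Q"
  shows "1 - exp (- Q) \<le> y 1 \<Longrightarrow> 1 - exp (- Q) \<le> sigma (preact r cb y)"
    and "y 1 \<le> exp (- Q) \<Longrightarrow> sigma (preact r cb y) \<le> exp (- Q)"
proof -
  have "preact r c y = 6 * Q * y 1 - 3 * Q"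
    using preact_single_weight[of 1 r c y] weights \<open>1 \<le> r\<close> by simp
  moreover have "\<bar>preact r cb y - preact r c y\<bar> \<le> lam * (real r * 1 + 1)"
    using close bounded by (rule preact_perturbation)
  ultimately have near: "\<bar>preact r cb y - (6 * Q * y 1 - 3 * Q)\<bar> \<le> Q"
    using \<open>(real r + 1) * lam \<le> Q\<close> by (simp add: algebra_simps)
  have "6 * Q * exp (- Q) \<le> 6" using mult_exp_minus_le_1[of Q] by simp
  show "1 - exp (- Q) \<le> sigma (preact r cb y)" if "1 - exp (- Q) \<le> y 1"
  proof (rule sigma_ge_if_near[OF near])
    have "6 * Q * (1 - exp (- Q)) \<le> 6 * Q * y 1"
      using that \<open>6 \<le> Q\<close> by (intro mult_left_mono) auto
    then show "2 * Q \<le> 6 * Q * y 1 - 3 * Q"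
      using \<open>6 * Q * exp (- Q) \<le> 6\<close> \<open>6 \<le> Q\<close> unfolding right_diff_distrib by linarith
  qed
  show "sigma (preact r cb y) \<le> exp (- Q)" if "y 1 \<le> exp (- Q)"
  proof (rule sigma_le_if_near[OF near])
    have "6 * Q * y 1 \<le> 6 * Q * exp (- Q)"
      using that \<open>6 \<le> Q\<close> by (intro mult_left_mono) auto
    then show "6 * Q * y 1 - 3 * Q \<le> - 2 * Q"
      using \<open>6 * Q * exp (- Q) \<le> 6\<close> \<open>6 \<le> Q\<close> by linarith
  qed
qed

lemma fnet_1: "fnet d r w x 1 i = sigma (preact d (w 0 i) x)"
  by (simp add: preact_def)

lemma fnet_Suc: "0 < l \<Longrightarrow> fnet d r w x (Suc l) i = sigma (preact r (w l i) (fnet d r w x l))"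
  by (cases l) (simp_all add: preact_def)

lemma abs_fnet_Suc_le_1: "\<bar>fnet d r w x (Suc l) i\<bar> \<le> 1"
  by (cases l) (auto simp: abs_le_iff less_imp_le sigma_pos sigma_less_1 order.strict_trans2)

lemma fnet_first_layer:
  fixes w wb :: "nat \<Rightarrow> nat \<Rightarrow> nat \<Rightarrow> real" and u v x :: "nat \<Rightarrow> real"
  assumes "0 < \<delta>" "1 \<le> lam" and K: "K * \<delta> = 4 * real d * lam^2"
    and w0a: "\<forall>j\<in>{1..d}. w 0 j j = K \<and> w 0 j 0 = - K * u j"
    and w0b: "\<forall>j\<in>{1..d}. w 0 (j + d) j = - K \<and> w 0 (j + d) 0 = K * v j"
    and w0c: "\<forall>s t. 1 \<le> s \<and> s \<le> 2 * d \<and> s \<noteq> t \<and> s \<noteq> t + d \<and> t > 0 \<longrightarrow> w 0 s t = 0"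
    and close: "\<forall>s t. \<bar>wb 0 s t - w 0 s t\<bar> \<le> lam"
    and x: "\<forall>j\<in>{1..d}. \<bar>x j\<bar> \<le> lam"
  shows "\<forall>i\<in>{1..d}. u i + \<delta> \<le> x i \<and> x i \<le> v i - \<delta> \<Longrightarrow>
           \<forall>t\<in>{1..2*d}. 1 - exp (- (2 * real d * lam^2)) \<le> fnet d r wb x 1 t"
    and "\<exists>i\<in>{1..d}. x i \<notin> {u i - \<delta> .. v i + \<delta>} \<Longrightarrow>
           \<exists>t\<in>{1..2*d}. fnet d r wb x 1 t \<le> exp (- (2 * real d * lam^2))"
proof -
  have "0 \<le> K * \<delta>" unfolding K by simp
  then have "0 \<le> K" using \<open>0 < \<delta>\<close> by (simp add: zero_le_mult_iff)
  have near: "\<bar>preact d (wb 0 s) x - (w 0 s j * x j + w 0 s 0)\<bar> \<le> 2 * real d * lam^2"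
    if "j \<in> {1..d}" and "s = j \<or> s = j + d" for s j
    using that w0c close x \<open>1 \<le> lam\<close> by (intro preact_single_weight_perturbed) auto
  have lower: "\<forall>j\<in>{1..d}. \<bar>preact d (wb 0 j) x - K * (x j - u j)\<bar> \<le> 2 * real d * lam^2"
  proof
    fix j assume j: "j \<in> {1..d}"
    then have "w 0 j j * x j + w 0 j 0 = K * (x j - u j)"
      using w0a by (simp add: algebra_simps)
    then show "\<bar>preact d (wb 0 j) x - K * (x j - u j)\<bar> \<le> 2 * real d * lam^2"
      using near[where s = j and j = j] j by simp
  qed
  have upper: "\<forall>j\<in>{1..d}. \<bar>preact d (wb 0 (j + d)) x - K * (v j - x j)\<bar> \<le> 2 * real d * lam^2"
  proof
    fix j assume j: "j \<in> {1..d}"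
    then have "w 0 (j + d) j = - K" "w 0 (j + d) 0 = K * v j" using w0b by auto
    then have "w 0 (j + d) j * x j + w 0 (j + d) 0 = K * (v j - x j)" by (simp add: algebra_simps)
    then show "\<bar>preact d (wb 0 (j + d)) x - K * (v j - x j)\<bar> \<le> 2 * real d * lam^2"
      using near[where s = "j + d" and j = j] j by simp
  qed
  have margin: "K * \<delta> = 2 * (2 * real d * lam^2)" unfolding K by simp
  note box = box_neurons_inside[where a = "\<lambda>t. preact d (wb 0 t) x", OF \<open>0 \<le> K\<close> margin lower upper]
    box_neurons_outside[where a = "\<lambda>t. preact d (wb 0 t) x", OF \<open>0 \<le> K\<close> margin lower upper]
  show "\<forall>i\<in>{1..d}. u i + \<delta> \<le> x i \<and> x i \<le> v i - \<delta> \<Longrightarrow>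
           \<forall>t\<in>{1..2*d}. 1 - exp (- (2 * real d * lam^2)) \<le> fnet d r wb x 1 t"
    and "\<exists>i\<in>{1..d}. x i \<notin> {u i - \<delta> .. v i + \<delta>} \<Longrightarrow>
           \<exists>t\<in>{1..2*d}. fnet d r wb x 1 t \<le> exp (- (2 * real d * lam^2))"
    unfolding fnet_1 by (fact box(1), fact box(2))
qed

lemma fnet_second_layer:
  assumes weights: "\<forall>t\<in>{1..2*d}. w 1 1 t = 8 * Q" "w 1 1 0 = - 8 * Q * (2 * real d - 1/2)"
      "\<forall>t>2*d. w 1 1 t = 0"
    and close: "\<forall>t\<le>r. \<bar>wb 1 1 t - w 1 1 t\<bar> \<le> lam"
    and "2 * d \<le> r" "(real r + 1) * lam \<le> Q" "8 * real d * e \<le> 1"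
  shows "\<forall>t\<in>{1..2*d}. 1 - e \<le> fnet d r wb x 1 t \<Longrightarrow> 1 - exp (- Q) \<le> fnet d r wb x 2 1"
    and "\<exists>t\<in>{1..2*d}. fnet d r wb x 1 t \<le> e \<Longrightarrow> fnet d r wb x 2 1 \<le> exp (- Q)"
proof -
  have "w 1 1 0 = - 8 * Q * (real (2 * d) - 1/2)" "4 * real (2 * d) * e \<le> 1"
    using weights(2) \<open>8 * real d * e \<le> 1\<close> by simp_all
  moreover have "\<forall>t\<in>{1..r}. \<bar>fnet d r wb x 1 t\<bar> \<le> 1"
    using abs_fnet_Suc_le_1[of d r wb x 0] by simp
  ultimately have "\<forall>t\<in>{1..2*d}. 1 - e \<le> fnet d r wb x 1 t \<Longrightarrow>
        1 - exp (- Q) \<le> sigma (preact r (wb 1 1) (fnet d r wb x 1))"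
    and "\<exists>t\<in>{1..2*d}. fnet d r wb x 1 t \<le> e \<Longrightarrow>
        sigma (preact r (wb 1 1) (fnet d r wb x 1)) \<le> exp (- Q)"
    using and_neuron[OF weights(1) _ weights(3) close] assms(5,6) by blast+
  moreover have "fnet d r wb x 2 1 = sigma (preact r (wb 1 1) (fnet d r wb x 1))"
    using fnet_Suc[of 1 d r wb x 1] by (simp add: numeral_2_eq_2)
  ultimately show "\<forall>t\<in>{1..2*d}. 1 - e \<le> fnet d r wb x 1 t \<Longrightarrow> 1 - exp (- Q) \<le> fnet d r wb x 2 1"
    and "\<exists>t\<in>{1..2*d}. fnet d r wb x 1 t \<le> e \<Longrightarrow> fnet d r wb x 2 1 \<le> exp (- Q)"
    by simp_all
qed

lemma fnet_deep_layers:
  assumes weights: "\<forall>l\<in>{2..<L}. w l 1 1 = 6 * Q \<and> w l 1 0 = - 3 * Q \<and> (\<forall>t>1. w l 1 t = 0)"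
    and close: "\<forall>l<L. \<forall>i j. \<bar>wb l i j - w l i j\<bar> \<le> lam"
    and "1 \<le> r" "(real r + 1) * lam \<le> Q" "6 \<le> Q" and "2 \<le> l" "l \<le> L"
  shows "1 - exp (- Q) \<le> fnet d r wb x 2 1 \<Longrightarrow> 1 - exp (- Q) \<le> fnet d r wb x l 1"
    and "fnet d r wb x 2 1 \<le> exp (- Q) \<Longrightarrow> fnet d r wb x l 1 \<le> exp (- Q)"
proof -
  have layer_step:
    "(1 - exp (- Q) \<le> fnet d r wb x m 1 \<longrightarrow> 1 - exp (- Q) \<le> fnet d r wb x (Suc m) 1) \<and>
     (fnet d r wb x m 1 \<le> exp (- Q) \<longrightarrow> fnet d r wb x (Suc m) 1 \<le> exp (- Q))"
    if m: "2 \<le> m" "m < L" for m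
  proof -
    have "w m 1 1 = 6 * Q" "w m 1 0 = - 3 * Q" "\<forall>t>1. w m 1 t = 0"
      and "\<forall>t\<le>r. \<bar>wb m 1 t - w m 1 t\<bar> \<le> lam"
      using weights close m by auto
    moreover have "\<forall>t\<in>{1..r}. \<bar>fnet d r wb x m t\<bar> \<le> 1"
      using abs_fnet_Suc_le_1[of d r wb x "m - 1"] m by simp
    ultimately have "1 - exp (- Q) \<le> fnet d r wb x m 1 \<Longrightarrow>
        1 - exp (- Q) \<le> sigma (preact r (wb m 1) (fnet d r wb x m))"
      and "fnet d r wb x m 1 \<le> exp (- Q) \<Longrightarrow>
        sigma (preact r (wb m 1) (fnet d r wb x m)) \<le> exp (- Q)"
      using amplifier_neuron assms(3-5) by blast+
    moreover have "fnet d r wb x (Suc m) 1 = sigma (preact r (wb m 1) (fnet d r wb x m))"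
      using m by (intro fnet_Suc) simp
    ultimately show ?thesis by simp
  qed
  show "1 - exp (- Q) \<le> fnet d r wb x l 1" if "1 - exp (- Q) \<le> fnet d r wb x 2 1"
    using \<open>2 \<le> l\<close> \<open>l \<le> L\<close>
  proof (induction l rule: dec_induct)
    case base
    from that show ?case .
  next
    case (step m)
    then show ?case using layer_step[of m] by simp
  qed
  show "fnet d r wb x l 1 \<le> exp (- Q)" if "fnet d r wb x 2 1 \<le> exp (- Q)"
    using \<open>2 \<le> l\<close> \<open>l \<le> L\<close>
  proof (induction l rule: dec_induct)
    case base
    from that show ?case .
  next
    case (step m)
    then show ?case using layer_step[of m] by simp
  qed
qed

theorem lemma5:
  fixes d r L n :: nat and \<delta> \<alpha> :: real
    and u v x :: "nat \<Rightarrow> real"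
    and w wb :: "nat \<Rightarrow> nat \<Rightarrow> nat \<Rightarrow> real"
  assumes d_pos: "d \<ge> 1"
    and delta: "0 < \<delta>" "\<delta> \<le> 1"
    and alpha: "1 \<le> \<alpha>" "\<alpha> \<le> ln (real n)"
    and uv: "\<forall>l\<in>{1..d}. v l - u l \<ge> 2 * \<delta>"
    and x_in: "\<forall>j\<in>{1..d}. - \<alpha> \<le> x j \<and> x j \<le> \<alpha>"
    and L: "L \<ge> 2" and r: "r \<ge> 2 * d"
    and n1: "n \<ge> 8 * d" and n2: "real n \<ge> exp (real r + 1)"
    and w0a: "\<forall>j\<in>{1..d}. w 0 j j = 4 * d * (ln n)^2 / \<delta> \<and>
                 w 0 j 0 = - (4 * d * (ln n)^2 / \<delta>) * u j"
    and w0b: "\<forall>j\<in>{1..d}. w 0 (j + d) j = - (4 * d * (ln n)^2 / \<delta>) \<and>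
                 w 0 (j + d) 0 = (4 * d * (ln n)^2 / \<delta>) * v j"
    and w0c: "\<forall>s t. 1 \<le> s \<and> s \<le> 2 * d \<and> s \<noteq> t \<and> s \<noteq> t + d \<and> t > 0 \<longrightarrow> w 0 s t = 0"
    and w1a: "\<forall>t\<in>{1..2*d}. w 1 1 t = 8 * (ln n)^2"
    and w1b: "w 1 1 0 = - 8 * (ln n)^2 * (2 * real d - 1/2)"
    and w1c: "\<forall>t. t > 2 * d \<longrightarrow> w 1 1 t = 0"
    and wl: "\<forall>l\<in>{2..L}. w l 1 1 = 6 * (ln n)^2 \<and> w l 1 0 = - 3 * (ln n)^2 \<and>
                (\<forall>t. t > 1 \<longrightarrow> w l 1 t = 0)"
    and wb: "\<forall>l<L. \<forall>i j. \<bar>wb l i j - w l i j\<bar> \<le> ln n"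
  shows "((\<forall>i\<in>{1..d}. u i + \<delta> \<le> x i \<and> x i \<le> v i - \<delta>) \<longrightarrow> fw d r L wb x \<ge> 1 - 1 / real n)
       \<and> ((\<exists>i\<in>{1..d}. x i \<notin> {u i - \<delta> .. v i + \<delta>}) \<longrightarrow> fw d r L wb x \<le> 1 / real n)"
proof -
  have "2 \<le> r" using r d_pos by linarith
  note size = ln_size_bounds[OF this n2]
  have x_bound: "\<forall>j\<in>{1..d}. \<bar>x j\<bar> \<le> ln n" using x_in alpha by force
  have K: "4 * d * (ln n)^2 / \<delta> * \<delta> = 4 * real d * (ln n)^2" using delta by simp
  have close: "\<forall>s t. \<bar>wb 0 s t - w 0 s t\<bar> \<le> ln n" "\<forall>t\<le>r. \<bar>wb 1 1 t - w 1 1 t\<bar> \<le> ln n"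
    using wb L by auto
  have exp_small: "8 * real d * exp (- (2 * real d * (ln n)^2)) \<le> 1"
    using size(3) by (intro mult_exp_minus_mult_le_1) simp
  note layer1 = fnet_first_layer[where w = w and wb = wb and u = u and v = v and x = x and r = r,
      OF delta(1) size(1) K w0a w0b w0c close(1) x_bound]
  note layer2 = fnet_second_layer[where w = w and wb = wb and x = x,
      OF w1a w1b w1c close(2) r size(2) exp_small]
  have "\<forall>l\<in>{2..<L}. w l 1 1 = 6 * (ln n)^2 \<and> w l 1 0 = - 3 * (ln n)^2 \<and> (\<forall>t>1. w l 1 t = 0)"
    using wl by auto
  note deep_layers = fnet_deep_layers[OF this wb _ size(2,3) L order.refl]
  show ?thesis unfolding fw_def using layer1 layer2 deep_layers \<open>2 \<le> r\<close> size(4) by fastforce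
qed

end
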